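(* Let $V\in\mathfrak M_S$ and let $\mathfrak h$ be a principal subalgebra of $\mathfrak g_2$. Then $\mathfrak h$ is adapted to $V$ if and only if $\theta_V\in H^{\mathfrak h}$, where $\theta_V\in G_2$ is defined by $\theta_V|_V=\mathrm{id}$, $\theta_V|_{V^\perp}=-\mathrm{id}$, and $H^{\mathfrak h}=\{F\in G_2: F\mathfrak hF^{-1}\subseteq\mathfrak h\}$.
   Context: Setup: Let $\langle\cdot,\cdot\rangle$ be the standard inner product on $\mathbb R^7$ with standard basis $e_1,\dots,e_7$, and let $\times$ be the anticommutative bilinear product on $\mathbb R^7$ determined by $e_i\times e_{i+1}=e_{i+3}$, $e_{i+1}\times e_{i+3}=e_i$, $e_{i+3}\times e_i=e_{i+1}$ (indices mod 7); it is a cross product. $G_2=\mathrm{Aut}(\mathbb R^7,\times)$, with Lie algebra $\mathfrak g_2=\mathrm{Der}(\mathbb R^7,\times)=\{d\in\mathfrak{gl}(7,\mathbb R): d(x\times y)=d(x)\times y+x\times d(y)\}$. $\mathfrak M_S=\{V\le\mathbb R^7:\dim V=3,\ V\times V\subseteq V\}$; for $V\in\mathfrak M_S$ one has $V\times V^\perp\subseteq V^\perp$ and $V^\perp\times V^\perp\subseteq V$, so $\theta_V$ is an automorphism of order two. For $V\in\mathfrak M_S$: $\mathfrak h_4^V=\{d\in\mathfrak g_2: d(V^\perp)\subseteq V^\perp\}$ and $\mathfrak m_4^V=\{d\in\mathfrak g_2: d(V)\subseteq V^\perp,\ d(V^\perp)\subseteq V\}$. A principal subalgebra of $\mathfrak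 g_2$ is a three-dimensional simple subalgebra $\mathfrak h$ whose complexification contains a principal (regular) nilpotent element of $\mathfrak g_2\otimes\mathbb C$ (one whose adjoint orbit is dense in the nilpotent variety). A principal subalgebra $\mathfrak h$ is adapted to $V\in\mathfrak M_S$ if $\mathfrak h=(\mathfrak h\cap\mathfrak h_4^V)\oplus(\mathfrak h\cap\mathfrak m_4^V)$. *)

theory Defs
  imports "HOL-Analysis.Analysis" "HOL-Library.Numeral_Type"
begin

text \<open>Indices of R^7 are the elements of the finite ring 7 = Z/7Z, so that
  index arithmetic is automatically mod 7.  Linear maps are 7x7 matrices.\<close>

definition g2_pos :: "7 \<Rightarrow> 7 \<Rightarrow> 7 \<Rightarrow> bool" where
  "g2_pos a b c \<longleftrightarrow> (\<exists>i::7. (a, b, c) = (i, i+1, i+3) \<or> (a, b, c) = (i+1, i+3, i)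
                                \<or> (a, b, c) = (i+3, i, i+1))"

definition g2_eps :: "7 \<Rightarrow> 7 \<Rightarrow> 7 \<Rightarrow> int" where
  "g2_eps a b c = (if g2_pos a b c then 1 else if g2_pos b a c then -1 else 0)"

definition cross7 :: "'a::comm_ring_1 ^ 7 \<Rightarrow> 'a ^ 7 \<Rightarrow> 'a ^ 7" where
  "cross7 x y = (\<chi> k. \<Sum>i\<in>UNIV. \<Sum>j\<in>UNIV. x $ i * y $ j * of_int (g2_eps i j k))"

definition G2 :: "('a::field ^ 7 ^ 7) set" where
  "G2 = {F. invertible F \<and> (\<forall>x y. F *v cross7 x y = cross7 (F *v x) (F *v y))}"

definition g2 :: "(real ^ 7 ^ 7) set" where
  "g2 = {d. \<forall>x y. d *v cross7 x y = cross7 (d *v x) y + cross7 x (d *v y)}"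

definition lie_bracket :: "'a::comm_ring_1 ^ 'n ^ 'n \<Rightarrow> 'a ^ 'n ^ 'n \<Rightarrow> 'a ^ 'n ^ 'n" where
  "lie_bracket A B = A ** B - B ** A"

definition M_S :: "(real ^ 7) set set" where
  "M_S = {V. subspace V \<and> dim V = 3 \<and> (\<forall>x\<in>V. \<forall>y\<in>V. cross7 x y \<in> V)}"

definition h4 :: "(real ^ 7) set \<Rightarrow> (real ^ 7 ^ 7) set" where
  "h4 V = {d \<in> g2. \<forall>w \<in> orthogonal_comp V. d *v w \<in> orthogonal_comp V}"

definition m4 :: "(real ^ 7) set \<Rightarrow> (real ^ 7 ^ 7) set" where
  "m4 V = {d \<in> g2. (\<forall>v \<in> V. d *v v \<in> orthogonal_comp V) \<and> (\<forall>w \<in> orthogonal_comp V. d *v w \<in> V)}"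

definition theta :: "(real ^ 7) set \<Rightarrow> real ^ 7 ^ 7" where
  "theta V = (THE F. (\<forall>v \<in> V. F *v v = v) \<and> (\<forall>w \<in> orthogonal_comp V. F *v w = - w))"

definition H_of :: "(real ^ 7 ^ 7) set \<Rightarrow> (real ^ 7 ^ 7) set" where
  "H_of h = {F \<in> G2. {F ** X ** matrix_inv F | X. X \<in> h} \<subseteq> h}"

definition cmat :: "real ^ 7 ^ 7 \<Rightarrow> complex ^ 7 ^ 7" where
  "cmat A = (\<chi> i j. complex_of_real (A $ i $ j))"

definition complexify :: "(real ^ 7 ^ 7) set \<Rightarrow> (complex ^ 7 ^ 7) set" where
  "complexify S = {cmat A + (\<chi> i j. \<i> * cmat B $ i $ j) | A B. A \<in> S \<and> B \<in> S}"

definition nilp_variety :: "(complex ^ 7 ^ 7) set" where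
  "nilp_variety = {x \<in> complexify g2. \<exists>k. \<forall>y \<in> complexify g2. (lie_bracket x ^^ k) y = 0}"

definition adj_orbit :: "complex ^ 7 ^ 7 \<Rightarrow> (complex ^ 7 ^ 7) set" where
  "adj_orbit x = {g ** x ** matrix_inv g | g. g \<in> G2}"

definition principal_nilpotent :: "complex ^ 7 ^ 7 \<Rightarrow> bool" where
  "principal_nilpotent e \<longleftrightarrow> e \<in> nilp_variety \<and> nilp_variety \<subseteq> closure (adj_orbit e)"

definition lie_subalgebra :: "(real ^ 7 ^ 7) set \<Rightarrow> bool" where
  "lie_subalgebra h \<longleftrightarrow> subspace h \<and> h \<subseteq> g2 \<and> (\<forall>a\<in>h. \<forall>b\<in>h. lie_bracket a b \<in> h)"

definition simple_lie :: "(real ^ 7 ^ 7) set \<Rightarrow> bool" where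
  "simple_lie h \<longleftrightarrow> (\<exists>a\<in>h. \<exists>b\<in>h. lie_bracket a b \<noteq> 0) \<and>
     (\<forall>I. subspace I \<and> I \<subseteq> h \<and> (\<forall>a\<in>h. \<forall>b\<in>I. lie_bracket a b \<in> I) \<longrightarrow> I = {0} \<or> I = h)"

definition principal_subalgebra :: "(real ^ 7 ^ 7) set \<Rightarrow> bool" where
  "principal_subalgebra h \<longleftrightarrow> lie_subalgebra h \<and> dim h = 3 \<and> simple_lie h \<and>
     (\<exists>e \<in> complexify h. principal_nilpotent e)"

definition adapted :: "(real ^ 7 ^ 7) set \<Rightarrow> (real ^ 7) set \<Rightarrow> bool" where
  "adapted h V \<longleftrightarrow> h = {a + b | a b. a \<in> h \<inter> h4 V \<and> b \<in> h \<inter> m4 V}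
                    \<and> (h \<inter> h4 V) \<inter> (h \<inter> m4 V) = {0}"

end

theory Submission
  imports Defs
begin

text \<open>Since \<open>V\<^sup>\<bottom> \<times> V\<^sup>\<bottom> \<subseteq> V\<close> (a dimension count), \<open>theta V\<close> lies in \<open>G2\<close>, so conjugation by it
  is an involution of \<open>g2\<close> whose \<open>+1\<close> and \<open>-1\<close> eigenspaces are exactly \<open>h4 V\<close> and \<open>m4 V\<close>.
  A subspace is invariant under a linear involution iff it is the sum of its intersections
  with the two eigenspaces.\<close>

lemma UNIV_7: "(UNIV::7 set) = {0,1,2,3,4,5,6}"
proof -
  have "x \<in> {0,1,2,3,4,5,6}" for x :: 7
  proof (cases x)
    case (of_int z)
    then have "z \<in> {0,1,2,3,4,5,6}" by auto
    then show ?thesis using of_int by auto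
  qed
  then show ?thesis by auto
qed

lemma all_7: "(\<forall>i::7. P i) \<longleftrightarrow> P 0 \<and> P 1 \<and> P 2 \<and> P 3 \<and> P 4 \<and> P 5 \<and> P 6"
  by (metis (full_types) UNIV_7 UNIV_I insertE empty_iff)

lemma sum_7: "(\<Sum>i\<in>(UNIV::7 set). f i) = f 0 + f 1 + f 2 + f 3 + f 4 + f 5 + f 6"
  unfolding UNIV_7 by (simp add: add.assoc)

lemma g2_pos_iff:
  "g2_pos a b c \<longleftrightarrow> (b = a+1 \<and> c = a+3) \<or> (a = c+1 \<and> b = c+3) \<or> (c = b+1 \<and> a = b+3)"
  unfolding g2_pos_def by (auto simp: algebra_simps)

lemma cross7_components:
  fixes x y :: "'a::comm_ring_1 ^ 7"
  shows "cross7 x y $ 0 = x$4*y$5 - x$5*y$4 + x$1*y$3 - x$3*y$1 + x$2*y$6 - x$6*y$2"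
    and "cross7 x y $ 1 = x$5*y$6 - x$6*y$5 + x$2*y$4 - x$4*y$2 + x$3*y$0 - x$0*y$3"
    and "cross7 x y $ 2 = x$6*y$0 - x$0*y$6 + x$3*y$5 - x$5*y$3 + x$4*y$1 - x$1*y$4"
    and "cross7 x y $ 3 = x$0*y$1 - x$1*y$0 + x$4*y$6 - x$6*y$4 + x$5*y$2 - x$2*y$5"
    and "cross7 x y $ 4 = x$1*y$2 - x$2*y$1 + x$5*y$0 - x$0*y$5 + x$6*y$3 - x$3*y$6"
    and "cross7 x y $ 5 = x$2*y$3 - x$3*y$2 + x$6*y$1 - x$1*y$6 + x$0*y$4 - x$4*y$0"
    and "cross7 x y $ 6 = x$3*y$4 - x$4*y$3 + x$0*y$2 - x$2*y$0 + x$1*y$5 - x$5*y$1"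
  by (simp_all add: cross7_def sum_7 g2_eps_def g2_pos_iff)

lemma cross7_anticomm: "cross7 x y = - cross7 y (x::'a::comm_ring_1 ^ 7)"
  by (simp add: vec_eq_iff all_7 cross7_components algebra_simps)

lemma cross7_self [simp]: "cross7 x x = (0::'a::comm_ring_1 ^ 7)"
  by (simp add: vec_eq_iff all_7 cross7_components algebra_simps)

lemma cross7_add_left: "cross7 (x + y) z = cross7 x z + cross7 y (z::'a::comm_ring_1 ^ 7)"
  by (simp add: vec_eq_iff all_7 cross7_components algebra_simps)

lemma cross7_add_right: "cross7 z (x + y) = cross7 z x + cross7 z (y::'a::comm_ring_1 ^ 7)"
  by (simp add: vec_eq_iff all_7 cross7_components algebra_simps)

lemma cross7_diff_left: "cross7 (x - y) z = cross7 x z - cross7 y (z::'a::comm_ring_1 ^ 7)"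
  by (simp add: vec_eq_iff all_7 cross7_components algebra_simps)

lemma cross7_diff_right: "cross7 z (x - y) = cross7 z x - cross7 z (y::'a::comm_ring_1 ^ 7)"
  by (simp add: vec_eq_iff all_7 cross7_components algebra_simps)

lemma cross7_zero_left [simp]: "cross7 0 y = (0::'a::comm_ring_1 ^ 7)"
  by (simp add: vec_eq_iff all_7 cross7_components)

lemma cross7_scaleR_left: "cross7 (c *\<^sub>R x) y = c *\<^sub>R cross7 x (y::real ^ 7)"
  by (simp add: vec_eq_iff all_7 cross7_components algebra_simps)

lemma cross7_scaleR_right: "cross7 x (c *\<^sub>R y) = c *\<^sub>R cross7 x (y::real ^ 7)"
  by (simp add: vec_eq_iff all_7 cross7_components algebra_simps)

lemma linear_cross7_left: "linear (\<lambda>x. cross7 x (y::real ^ 7))"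
  by (rule linearI) (simp_all add: cross7_add_left cross7_scaleR_left)

lemma inner_cross7_cycle: "inner (cross7 x y) z = inner (cross7 y z) (x::real ^ 7)"
  by (simp add: inner_vec_def sum_7 cross7_components algebra_simps)

lemma inner_cross7_right [simp]: "inner (cross7 x y) (y::real ^ 7) = 0"
  using inner_cross7_cycle[of x y y] by simp

lemma cross7_cross7_same:
  "cross7 x (cross7 y x) = inner x x *\<^sub>R y - inner x y *\<^sub>R (x::real ^ 7)"
  by (simp add: vec_eq_iff all_7 inner_vec_def sum_7 cross7_components algebra_simps)

lemma cross7_cross7_orthogonal:
  "inner x y = 0 \<Longrightarrow> cross7 x (cross7 y x) = inner x x *\<^sub>R (y::real ^ 7)"
  by (simp add: cross7_cross7_same)

lemma orthogonal_comp_decomp: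
  fixes V :: "'a::euclidean_space set"
  assumes "subspace V"
  obtains v w where "v \<in> V" "w \<in> orthogonal_comp V" "x = v + w"
  using subspace_sum_orthogonal_comp[OF assms] by (metis UNIV_I set_plus_elim)

lemma orthogonal_comp_decomp_unique:
  fixes V :: "'a::real_inner set"
  assumes "subspace V" "v + w = v' + w'"
    and "v \<in> V" "v' \<in> V" "w \<in> orthogonal_comp V" "w' \<in> orthogonal_comp V"
  shows "v = v'" "w = w'"
proof -
  have "v - v' = w' - w" using assms(2) by (simp add: algebra_simps)
  moreover have "v - v' \<in> V" "w' - w \<in> orthogonal_comp V"
    using assms by (simp_all add: subspace_diff subspace_orthogonal_comp)
  ultimately have "v - v' \<in> V \<inter> orthogonal_comp V" by simp
  then have "v - v' = 0" using orthogonal_Int_0[OF assms(1)] by blast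
  then show "v = v'" "w = w'" using assms(2) by simp_all
qed

lemma linear_orthogonal_reflection_exists:
  fixes V :: "'a::euclidean_space set"
  assumes V: "subspace V"
  shows "\<exists>f. linear f \<and> (\<forall>v\<in>V. f v = v) \<and> (\<forall>w\<in>orthogonal_comp V. f w = - w)"
proof -
  let ?W = "orthogonal_comp V"
  have "\<exists>v. v \<in> V \<and> x - v \<in> ?W" for x
    by (rule orthogonal_comp_decomp[OF V, of x]) auto
  then obtain p where p: "\<And>x. p x \<in> V" "\<And>x. x - p x \<in> ?W" by metis
  have p_eq: "p x = v" if "v \<in> V" "x - v \<in> ?W" for x v
    using orthogonal_comp_decomp_unique(1)[OF V _ p(1)[of x] that(1) p(2)[of x] that(2)] by simp
  have "linear p"
  proof (rule linearI)
    fix x y :: 'a and c :: real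
    have "x + y - (p x + p y) = (x - p x) + (y - p y)" by (simp add: algebra_simps)
    also have "\<dots> \<in> ?W" by (intro subspace_add[OF subspace_orthogonal_comp] p(2))
    finally show "p (x + y) = p x + p y"
      by (intro p_eq subspace_add[OF V] p(1))
    have "c *\<^sub>R x - c *\<^sub>R p x = c *\<^sub>R (x - p x)" by (simp add: algebra_simps)
    also have "\<dots> \<in> ?W" by (intro subspace_scale[OF subspace_orthogonal_comp] p(2))
    finally show "p (c *\<^sub>R x) = c *\<^sub>R p x"
      by (intro p_eq subspace_scale[OF V] p(1))
  qed
  then have "linear (\<lambda>x. p x - (x - p x))"
    by (intro linear_compose_sub bounded_linear.linear[OF bounded_linear_ident])
  moreover have "p v - (v - p v) = v" if "v \<in> V" for v
    using p_eq[OF that, of v] subspace_0[OF subspace_orthogonal_comp, of V] by simp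
  moreover have "p w - (w - p w) = - w" if "w \<in> ?W" for w
    using p_eq[OF subspace_0[OF V], of w] that by simp
  ultimately show ?thesis by blast
qed

lemma matrix_vector_mult_uminus: "A *v (- x) = - (A *v (x::real ^ 'n))"
  by (rule linear_neg[OF matrix_vector_mul_linear])

lemma matrix_vector_mult_uminus_left: "(- A) *v x = - (A *v (x::'a::ring_1 ^ 'n))"
  by (simp add: matrix_vector_mult_def vec_eq_iff sum_negf)

lemma eq_neg_iff_zero: "(x::'a::real_vector) = - x \<longleftrightarrow> x = 0"
  by (metis eq_neg_iff_add_eq_0 scaleR_2 scaleR_eq_0_iff zero_neq_numeral neg_0_equal_iff_equal)

lemma theta_spec:
  assumes V: "subspace V"
  shows "(\<forall>v\<in>V. theta V *v v = v) \<and> (\<forall>w\<in>orthogonal_comp V. theta V *v w = - w)"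
  unfolding theta_def
proof (rule theI')
  obtain f where f: "linear f" "\<forall>v\<in>V. f v = v" "\<forall>w\<in>orthogonal_comp V. f w = - w"
    using linear_orthogonal_reflection_exists[OF V] by blast
  have "F = G"
    if F: "(\<forall>v\<in>V. F *v v = v) \<and> (\<forall>w\<in>orthogonal_comp V. F *v w = - w)"
    and G: "(\<forall>v\<in>V. G *v v = v) \<and> (\<forall>w\<in>orthogonal_comp V. G *v w = - w)" for F G :: "real^7^7"
  proof (subst matrix_eq, intro allI)
    fix x
    obtain v w where "v \<in> V" "w \<in> orthogonal_comp V" "x = v + w"
      by (rule orthogonal_comp_decomp[OF V])
    then show "F *v x = G *v x" using F G by (simp add: matrix_vector_right_distrib)
  qed
  moreover have "(\<forall>v\<in>V. matrix f *v v = v) \<and> (\<forall>w\<in>orthogonal_comp V. matrix f *v w = - w)"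
    using f by (simp add: matrix_works)
  ultimately show "\<exists>!F. (\<forall>v\<in>V. F *v v = v) \<and> (\<forall>w\<in>orthogonal_comp V. F *v w = - w)"
    by blast
qed

lemma theta_apply:
  assumes "subspace V" "v \<in> V" "w \<in> orthogonal_comp V"
  shows "theta V *v (v + w) = v - w"
  using theta_spec[OF assms(1)] assms(2,3) by (simp add: matrix_vector_right_distrib)

lemma theta_theta:
  assumes V: "subspace V"
  shows "theta V ** theta V = mat 1"
proof (subst matrix_eq, intro allI)
  fix x
  obtain v w where vw: "v \<in> V" "w \<in> orthogonal_comp V" "x = v + w"
    by (rule orthogonal_comp_decomp[OF V])
  have "theta V *v (theta V *v x) = x"
    using theta_apply[OF V vw(1,2)] vw(3)
      theta_apply[OF V vw(1) subspace_neg[OF subspace_orthogonal_comp vw(2)]]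
    by simp
  then show "(theta V ** theta V) *v x = mat 1 *v x"
    by (simp add: matrix_vector_mul_assoc)
qed

lemma matrix_inv_theta:
  assumes "subspace V"
  shows "matrix_inv (theta V) = theta V"
  unfolding matrix_inv_def
proof (rule some_equality)
  fix A assume A: "theta V ** A = mat 1 \<and> A ** theta V = mat 1"
  have "A = A ** (theta V ** theta V)" using theta_theta[OF assms] by simp
  also have "\<dots> = theta V" using A by (simp add: matrix_mul_assoc)
  finally show "A = theta V" .
qed (simp add: theta_theta[OF assms])

lemma theta_fixed_iff:
  assumes V: "subspace V"
  shows "theta V *v z = z \<longleftrightarrow> z \<in> V"
proof -
  obtain v w where vw: "v \<in> V" "w \<in> orthogonal_comp V" "z = v + w"
    by (rule orthogonal_comp_decomp[OF V])
  have "theta V *v z = z \<longleftrightarrow> v - w = v + w"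
    by (simp add: vw(3) theta_apply[OF V vw(1,2)])
  also have "\<dots> \<longleftrightarrow> w = - w"
    by (metis add_left_cancel diff_conv_add_uminus)
  also have "\<dots> \<longleftrightarrow> w = 0" by (rule eq_neg_iff_zero)
  also have "\<dots> \<longleftrightarrow> z \<in> V"
  proof
    assume "z \<in> V"
    then have "w \<in> V" using vw subspace_diff[OF V, of z v] by simp
    then show "w = 0" using vw(2) orthogonal_Int_0[OF V] by blast
  qed (use vw in simp)
  finally show ?thesis .
qed

lemma theta_negated_iff:
  assumes V: "subspace V"
  shows "theta V *v z = - z \<longleftrightarrow> z \<in> orthogonal_comp V"
proof -
  obtain v w where vw: "v \<in> V" "w \<in> orthogonal_comp V" "z = v + w"
    by (rule orthogonal_comp_decomp[OF V])
  have "theta V *v z = - z \<longleftrightarrow> v - w = - (v + w)"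
    by (simp add: vw(3) theta_apply[OF V vw(1,2)])
  also have "\<dots> \<longleftrightarrow> v = - v" by auto
  also have "\<dots> \<longleftrightarrow> v = 0" by (rule eq_neg_iff_zero)
  also have "\<dots> \<longleftrightarrow> z \<in> orthogonal_comp V"
  proof
    assume "z \<in> orthogonal_comp V"
    then have "v \<in> orthogonal_comp V"
      using vw subspace_diff[OF subspace_orthogonal_comp, of z V w] by simp
    then show "v = 0" using vw(1) orthogonal_Int_0[OF V] by blast
  qed (use vw in simp)
  finally show ?thesis .
qed

lemma conj_involution_eq_iff:
  fixes T d e :: "'a::semiring_1 ^ 'n ^ 'n"
  assumes "T ** T = mat 1"
  shows "T ** d ** T = e \<longleftrightarrow> T ** d = e ** T"
proof
  assume "T ** d ** T = e"
  then show "T ** d = e ** T"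
    by (metis assms matrix_mul_assoc matrix_mul_rid)
next
  assume "T ** d = e ** T"
  then show "T ** d ** T = e"
    by (metis assms matrix_mul_assoc matrix_mul_rid)
qed

lemma theta_conj_eq_iff:
  assumes V: "subspace V"
  shows "theta V ** d ** theta V = d
           \<longleftrightarrow> (\<forall>v\<in>V. d *v v \<in> V) \<and> (\<forall>w\<in>orthogonal_comp V. d *v w \<in> orthogonal_comp V)"
    (is "_ \<longleftrightarrow> ?pres")
proof -
  let ?T = "theta V"
  have "?T ** d ** ?T = d \<longleftrightarrow> (\<forall>x. ?T *v (d *v x) = d *v (?T *v x))"
    by (subst conj_involution_eq_iff[OF theta_theta[OF V]])
      (simp add: matrix_eq matrix_vector_mul_assoc[symmetric])
  also have "\<dots> \<longleftrightarrow> ?pres"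
  proof
    assume c: "\<forall>x. ?T *v (d *v x) = d *v (?T *v x)"
    show ?pres
    proof (intro conjI ballI)
      fix v assume "v \<in> V"
      then have "?T *v (d *v v) = d *v v" using c theta_spec[OF V] by simp
      then show "d *v v \<in> V" by (simp add: theta_fixed_iff[OF V])
    next
      fix w assume "w \<in> orthogonal_comp V"
      then have "?T *v (d *v w) = - (d *v w)"
        using c theta_spec[OF V] by (simp add: matrix_vector_mult_uminus)
      then show "d *v w \<in> orthogonal_comp V" by (simp add: theta_negated_iff[OF V])
    qed
  next
    assume ?pres
    show "\<forall>x. ?T *v (d *v x) = d *v (?T *v x)"
    proof
      fix x
      obtain v w where vw: "v \<in> V" "w \<in> orthogonal_comp V" "x = v + w"
        by (rule orthogonal_comp_decomp[OF V])
      then show "?T *v (d *v x) = d *v (?T *v x)"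
        using \<open>?pres\<close> theta_apply[OF V vw(1,2)] theta_apply[OF V, of "d *v v" "d *v w"]
        by (simp add: matrix_vector_right_distrib matrix_vector_mult_diff_distrib)
    qed
  qed
  finally show ?thesis .
qed

lemma theta_conj_eq_neg_iff:
  assumes V: "subspace V"
  shows "theta V ** d ** theta V = - d
           \<longleftrightarrow> (\<forall>v\<in>V. d *v v \<in> orthogonal_comp V) \<and> (\<forall>w\<in>orthogonal_comp V. d *v w \<in> V)"
    (is "_ \<longleftrightarrow> ?swap")
proof -
  let ?T = "theta V"
  have "?T ** d ** ?T = - d \<longleftrightarrow> (\<forall>x. ?T *v (d *v x) = - (d *v (?T *v x)))"
    by (subst conj_involution_eq_iff[OF theta_theta[OF V]])
      (simp add: matrix_eq matrix_vector_mul_assoc[symmetric] matrix_vector_mult_uminus_left)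
  also have "\<dots> \<longleftrightarrow> ?swap"
  proof
    assume c: "\<forall>x. ?T *v (d *v x) = - (d *v (?T *v x))"
    show ?swap
    proof (intro conjI ballI)
      fix v assume "v \<in> V"
      then have "?T *v (d *v v) = - (d *v v)" using c theta_spec[OF V] by simp
      then show "d *v v \<in> orthogonal_comp V" by (simp add: theta_negated_iff[OF V])
    next
      fix w assume "w \<in> orthogonal_comp V"
      then have "?T *v (d *v w) = d *v w"
        using c theta_spec[OF V] by (simp add: matrix_vector_mult_uminus)
      then show "d *v w \<in> V" by (simp add: theta_fixed_iff[OF V])
    qed
  next
    assume ?swap
    show "\<forall>x. ?T *v (d *v x) = - (d *v (?T *v x))"
    proof
      fix x
      obtain v w where vw: "v \<in> V" "w \<in> orthogonal_comp V" "x = v + w"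
        by (rule orthogonal_comp_decomp[OF V])
      then show "?T *v (d *v x) = - (d *v (?T *v x))"
        using \<open>?swap\<close> theta_apply[OF V vw(1,2)] theta_apply[OF V, of "d *v w" "d *v v"]
        by (simp add: matrix_vector_right_distrib matrix_vector_mult_diff_distrib add.commute)
    qed
  qed
  finally show ?thesis .
qed

lemma dim_orthogonal_comp:
  fixes V :: "'a::euclidean_space set"
  assumes "subspace V"
  shows "dim (orthogonal_comp V) + dim V = DIM('a)"
proof -
  have "dim {y \<in> UNIV. \<forall>x\<in>V. orthogonal x y} + dim V = dim (UNIV :: 'a set)"
    by (rule dim_subspace_orthogonal_to_vectors[OF assms subspace_UNIV]) simp
  moreover have "{y \<in> UNIV. \<forall>x\<in>V. orthogonal x y} = orthogonal_comp V"
    by (auto simp: orthogonal_comp_def)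
  ultimately show ?thesis by simp
qed

lemma cross7_mem_orthogonal_comp:
  fixes V :: "(real ^ 7) set"
  assumes V: "\<forall>x\<in>V. \<forall>y\<in>V. cross7 x y \<in> V" and "v \<in> V" "w \<in> orthogonal_comp V"
  shows "cross7 v w \<in> orthogonal_comp V"
  unfolding orthogonal_comp_def orthogonal_def
proof (intro CollectI ballI)
  fix y assume "y \<in> V"
  then have "cross7 y v \<in> V" using V \<open>v \<in> V\<close> by blast
  then have "inner (cross7 y v) w = 0"
    using \<open>w \<in> orthogonal_comp V\<close> by (simp add: orthogonal_comp_def orthogonal_def)
  have "inner y (cross7 v w) = inner (cross7 v w) y" by (rule inner_commute)
  also have "\<dots> = inner (cross7 w y) v" by (rule inner_cross7_cycle)
  also have "\<dots> = inner (cross7 y v) w" by (rule inner_cross7_cycle)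
  finally show "inner y (cross7 v w) = 0" using \<open>inner (cross7 y v) w = 0\<close> by simp
qed

text \<open>For \<open>w \<noteq> 0\<close> in \<open>V\<^sup>\<bottom>\<close> the map \<open>v \<mapsto> v \<times> w\<close> is injective on \<open>V\<close> (it is inverted up to the
  factor \<open>|w|\<^sup>2\<close> by \<open>w \<times> _\<close>) with image in \<open>V\<^sup>\<bottom> \<inter> w\<^sup>\<bottom>\<close>, so together with \<open>w\<close> it fills
  the four-dimensional space \<open>V\<^sup>\<bottom>\<close>.\<close>

lemma orthogonal_comp_eq_span_cross7:
  assumes V: "V \<in> M_S" and w: "w \<in> orthogonal_comp V" "w \<noteq> 0"
  shows "span (insert w ((\<lambda>v. cross7 v w) ` V)) = orthogonal_comp V"
proof -
  let ?W = "orthogonal_comp V" and ?f = "\<lambda>v. cross7 v w"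
  have sV: "subspace V" and dV: "dim V = 3" and cV: "\<forall>x\<in>V. \<forall>y\<in>V. cross7 x y \<in> V"
    using V by (auto simp: M_S_def)
  have w_cross: "cross7 w (?f v) = inner w w *\<^sub>R v" if "v \<in> V" for v
    using that w(1)
    by (intro cross7_cross7_orthogonal) (simp add: orthogonal_comp_def orthogonal_def inner_commute)
  have "inj_on ?f V"
  proof (rule inj_onI)
    fix v v' assume v: "v \<in> V" "v' \<in> V" "?f v = ?f v'"
    then have "inner w w *\<^sub>R v = inner w w *\<^sub>R v'" using w_cross by metis
    then show "v = v'" using w(2) by simp
  qed
  moreover have span_V: "span V = V" using sV by (rule span_eq_iff[THEN iffD2])
  ultimately have dim_fV: "dim (?f ` V) = 3"
    using dim_image_eq[OF linear_cross7_left[of w], of V, unfolded span_V] dV by simp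
  have span_fV: "span (?f ` V) = ?f ` V"
    by (rule span_eq_iff[THEN iffD2, OF linear_subspace_image[OF linear_cross7_left[of w] sV]])
  have "w \<notin> ?f ` V"
  proof
    assume "w \<in> ?f ` V"
    then obtain v where "w = cross7 v w" by blast
    then have "inner w w = inner (cross7 v w) w" by simp
    then show False using w(2) by simp
  qed
  then have "dim (insert w (?f ` V)) = 4"
    using dim_insert[of w "?f ` V", unfolded span_fV] dim_fV by simp
  moreover have "insert w (?f ` V) \<subseteq> ?W"
    using w(1) cross7_mem_orthogonal_comp[OF cV] by auto
  then have "span (insert w (?f ` V)) \<subseteq> ?W"
    by (rule span_minimal[OF _ subspace_orthogonal_comp])
  moreover have "dim ?W = 4"
    using dim_orthogonal_comp[OF sV] dV by simp
  ultimately show ?thesis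
    by (intro subspace_dim_equal subspace_span subspace_orthogonal_comp) simp_all
qed

lemma cross7_orthogonal_comp_mem:
  assumes V: "V \<in> M_S" and w: "w \<in> orthogonal_comp V" and w': "w' \<in> orthogonal_comp V"
  shows "cross7 w w' \<in> V"
proof (cases "w = 0")
  case True
  then show ?thesis using V by (simp add: M_S_def subspace_0)
next
  case False
  have sV: "subspace V" using V by (simp add: M_S_def)
  have "w' \<in> span (insert w ((\<lambda>v. cross7 v w) ` V))"
    using orthogonal_comp_eq_span_cross7[OF V w False] w' by simp
  then obtain k where "w' - k *\<^sub>R w \<in> span ((\<lambda>v. cross7 v w) ` V)"
    by (auto simp: span_breakdown_eq)
  then obtain v where v: "v \<in> V" "w' = k *\<^sub>R w + cross7 v w"
    using span_eq_iff[THEN iffD2, OF linear_subspace_image[OF linear_cross7_left[of w] sV]]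
    by (metis (no_types, lifting) diff_add_cancel add.commute imageE)
  have "inner w v = 0" using v(1) w by (simp add: orthogonal_comp_def orthogonal_def inner_commute)
  then have "cross7 w w' = inner w w *\<^sub>R v"
    by (simp add: v(2) cross7_add_right cross7_scaleR_right cross7_cross7_orthogonal)
  then show ?thesis using v(1) sV by (simp add: subspace_scale)
qed

lemma orthogonal_comp_eq_0_if_cross7_eq_0:
  assumes V: "V \<in> M_S" and q: "q \<in> orthogonal_comp V"
    and zero: "\<And>w. w \<in> orthogonal_comp V \<Longrightarrow> cross7 q w = 0"
  shows "q = 0"
proof -
  have "\<not> V \<subseteq> {0}" using V dim_eq_0[of V] by (auto simp: M_S_def)
  then obtain u where u: "u \<in> V" "u \<noteq> 0" by blast
  have "inner u q = 0" using q u(1) by (simp add: orthogonal_comp_def orthogonal_def)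
  then have "inner q u = 0" by (simp add: inner_commute)
  then have "inner q q *\<^sub>R u = cross7 q (cross7 u q)" by (simp add: cross7_cross7_same)
  also have "\<dots> = 0"
    using V u(1) q by (intro zero cross7_mem_orthogonal_comp) (auto simp: M_S_def)
  finally show "q = 0" using u(2) by simp
qed

lemma theta_in_G2:
  assumes V: "V \<in> M_S"
  shows "theta V \<in> G2"
proof -
  let ?W = "orthogonal_comp V"
  have sV: "subspace V" and cV: "\<forall>x\<in>V. \<forall>y\<in>V. cross7 x y \<in> V"
    using V by (auto simp: M_S_def)
  have "theta V *v cross7 x y = cross7 (theta V *v x) (theta V *v y)" for x y
  proof -
    obtain p q where pq: "p \<in> V" "q \<in> ?W" "x = p + q" by (rule orthogonal_comp_decomp[OF sV])
    obtain p' q' where pq': "p' \<in> V" "q' \<in> ?W" "y = p' + q'" by (rule orthogonal_comp_decomp[OF sV])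
    have "cross7 x y = (cross7 p p' + cross7 q q') + (cross7 p q' + cross7 q p')"
      by (simp add: pq(3) pq'(3) cross7_add_left cross7_add_right algebra_simps)
    moreover have "cross7 p p' + cross7 q q' \<in> V"
      using cV pq pq' cross7_orthogonal_comp_mem[OF V] by (simp add: subspace_add[OF sV])
    moreover have "cross7 p q' \<in> ?W" "cross7 q p' \<in> ?W"
      using cross7_mem_orthogonal_comp[OF cV] pq pq' cross7_anticomm[of q p']
      by (auto simp: subspace_neg[OF subspace_orthogonal_comp])
    then have "cross7 p q' + cross7 q p' \<in> ?W"
      by (simp add: subspace_add[OF subspace_orthogonal_comp])
    ultimately have
      "theta V *v cross7 x y = (cross7 p p' + cross7 q q') - (cross7 p q' + cross7 q p')"
      using theta_apply[OF sV] by simp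
    also have "\<dots> = cross7 (p - q) (p' - q')"
      by (simp add: cross7_diff_left cross7_diff_right algebra_simps)
    also have "\<dots> = cross7 (theta V *v x) (theta V *v y)"
      using theta_apply[OF sV] pq pq' by simp
    finally show ?thesis .
  qed
  moreover have "invertible (theta V)"
    unfolding invertible_def using theta_theta[OF sV] by blast
  ultimately show ?thesis by (simp add: G2_def)
qed

lemma g2_preserves_M_S_subspace:
  assumes V: "V \<in> M_S" and d: "d \<in> g2"
    and dW: "\<forall>w\<in>orthogonal_comp V. d *v w \<in> orthogonal_comp V" and v: "v \<in> V"
  shows "d *v v \<in> V"
proof -
  let ?W = "orthogonal_comp V"
  have sV: "subspace V" and cV: "\<forall>x\<in>V. \<forall>y\<in>V. cross7 x y \<in> V"
    using V by (auto simp: M_S_def)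
  obtain p q where pq: "p \<in> V" "q \<in> ?W" "d *v v = p + q" by (rule orthogonal_comp_decomp[OF sV])
  have "q = 0"
  proof (rule orthogonal_comp_eq_0_if_cross7_eq_0[OF V pq(2)])
    fix w assume w: "w \<in> ?W"
    have "cross7 q w = d *v cross7 v w - cross7 p w - cross7 v (d *v w)"
      using d pq(3) by (simp add: g2_def cross7_add_left algebra_simps)
    also have "\<dots> \<in> ?W"
      using dW w v pq(1) cross7_mem_orthogonal_comp[OF cV]
      by (intro subspace_diff[OF subspace_orthogonal_comp]) auto
    finally have "cross7 q w \<in> ?W" .
    moreover have "cross7 q w \<in> V" by (rule cross7_orthogonal_comp_mem[OF V pq(2) w])
    ultimately show "cross7 q w = 0" using orthogonal_Int_0[OF sV] by blast
  qed
  then show ?thesis using pq by simp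
qed

lemma h4_iff_theta_conj:
  assumes V: "V \<in> M_S"
  shows "d \<in> h4 V \<longleftrightarrow> d \<in> g2 \<and> theta V ** d ** theta V = d"
proof -
  have sV: "subspace V" using V by (simp add: M_S_def)
  show ?thesis
    unfolding h4_def theta_conj_eq_iff[OF sV] using g2_preserves_M_S_subspace[OF V] by blast
qed

lemma m4_iff_theta_conj:
  assumes "subspace V"
  shows "d \<in> m4 V \<longleftrightarrow> d \<in> g2 \<and> theta V ** d ** theta V = - d"
  unfolding m4_def theta_conj_eq_neg_iff[OF assms] by blast

lemma invariant_subspace_iff_eigenspace_sum:
  fixes \<sigma> :: "'a::real_vector \<Rightarrow> 'a"
  assumes lin: "linear \<sigma>" and inv: "\<And>x. \<sigma> (\<sigma> x) = x" and h: "subspace h"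
  shows "\<sigma> ` h \<subseteq> h \<longleftrightarrow> h = {a + b | a b. a \<in> h \<and> \<sigma> a = a \<and> b \<in> h \<and> \<sigma> b = - b}"
proof
  assume inv_h: "\<sigma> ` h \<subseteq> h"
  have "\<exists>a b. X = a + b \<and> a \<in> h \<and> \<sigma> a = a \<and> b \<in> h \<and> \<sigma> b = - b" if X: "X \<in> h" for X
  proof (intro exI conjI)
    have "\<sigma> X \<in> h" using inv_h X by blast
    then show "(1/2) *\<^sub>R (X + \<sigma> X) \<in> h" "(1/2) *\<^sub>R (X - \<sigma> X) \<in> h"
      using X h by (simp_all add: subspace_scale subspace_add subspace_diff)
    show "\<sigma> ((1/2) *\<^sub>R (X + \<sigma> X)) = (1/2) *\<^sub>R (X + \<sigma> X)"
      by (simp add: linear_scale[OF lin] linear_add[OF lin] inv add.commute)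
    show "\<sigma> ((1/2) *\<^sub>R (X - \<sigma> X)) = - ((1/2) *\<^sub>R (X - \<sigma> X))"
      by (simp add: linear_scale[OF lin] linear_diff[OF lin] inv algebra_simps)
    show "X = (1/2) *\<^sub>R (X + \<sigma> X) + (1/2) *\<^sub>R (X - \<sigma> X)"
      by (simp add: scaleR_add_right[symmetric] scaleR_2[symmetric])
  qed
  then show "h = {a + b | a b. a \<in> h \<and> \<sigma> a = a \<and> b \<in> h \<and> \<sigma> b = - b}"
    using subspace_add[OF h] by blast
next
  assume h_eq: "h = {a + b | a b. a \<in> h \<and> \<sigma> a = a \<and> b \<in> h \<and> \<sigma> b = - b}"
  show "\<sigma> ` h \<subseteq> h"
  proof (rule image_subsetI)
    fix X assume "X \<in> h"
    then obtain a b where ab: "X = a + b" "a \<in> h" "\<sigma> a = a" "b \<in> h" "\<sigma> b = - b"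
      using h_eq by blast
    then have "\<sigma> X = a - b" by (simp add: linear_add[OF lin])
    then show "\<sigma> X \<in> h" using ab subspace_diff[OF h] by simp
  qed
qed

lemma eigenspaces_inter_eq_0:
  fixes \<sigma> :: "'a::real_vector \<Rightarrow> 'a"
  assumes "linear \<sigma>" and "subspace h"
  shows "{a \<in> h. \<sigma> a = a} \<inter> {b \<in> h. \<sigma> b = - b} = {0}"
proof
  show "{a \<in> h. \<sigma> a = a} \<inter> {b \<in> h. \<sigma> b = - b} \<subseteq> {0}"
    using eq_neg_iff_zero by fastforce
  show "{0} \<subseteq> {a \<in> h. \<sigma> a = a} \<inter> {b \<in> h. \<sigma> b = - b}"
    using subspace_0[OF assms(2)] linear_0[OF assms(1)] by simp
qed

lemma matrix_mul_add_rdistrib: "(A + B) ** C = A ** C + B ** (C::'a::semiring_1 ^ 'n ^ 'm)"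
  by (simp add: matrix_matrix_mult_def vec_eq_iff sum.distrib algebra_simps)

lemma linear_matrix_conj: "linear (\<lambda>X::real ^ 'n ^ 'm. A ** X ** B)"
  by (rule linearI)
    (simp_all add: matrix_add_ldistrib matrix_mul_add_rdistrib matrix_scalar_ac scalar_matrix_assoc)

lemma theta_conj_theta_conj:
  assumes "subspace V"
  shows "theta V ** (theta V ** X ** theta V) ** theta V = X"
proof -
  have "theta V ** (theta V ** X ** theta V) ** theta V
          = (theta V ** theta V) ** X ** (theta V ** theta V)"
    by (simp add: matrix_mul_assoc)
  then show ?thesis by (simp add: theta_theta[OF assms])
qed

lemma theta_in_H_of_iff:
  assumes "V \<in> M_S"
  shows "theta V \<in> H_of h \<longleftrightarrow> (\<lambda>X. theta V ** X ** theta V) ` h \<subseteq> h"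
proof -
  have "subspace V" using assms by (simp add: M_S_def)
  then have "theta V \<in> H_of h \<longleftrightarrow> {theta V ** X ** theta V | X. X \<in> h} \<subseteq> h"
    using theta_in_G2[OF assms] by (simp add: H_of_def matrix_inv_theta)
  then show ?thesis by (simp only: Setcompr_eq_image)
qed

theorem mainTheorem10:
  assumes "V \<in> M_S" and "principal_subalgebra h"
  shows "adapted h V \<longleftrightarrow> theta V \<in> H_of h"
proof -
  have sV: "subspace V" using assms(1) by (simp add: M_S_def)
  have sh: "subspace h" and hg: "h \<subseteq> g2"
    using assms(2) by (auto simp: principal_subalgebra_def lie_subalgebra_def)
  define \<sigma> where "\<sigma> X = theta V ** X ** theta V" for X
  have lin: "linear \<sigma>" unfolding \<sigma>_def by (rule linear_matrix_conj)
  have inv: "\<sigma> (\<sigma> X) = X" for X unfolding \<sigma>_def by (rule theta_conj_theta_conj[OF sV])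
  have "h \<inter> h4 V = {a \<in> h. \<sigma> a = a}"
    using hg h4_iff_theta_conj[OF assms(1)] unfolding \<sigma>_def by blast
  moreover have "h \<inter> m4 V = {b \<in> h. \<sigma> b = - b}"
    using hg m4_iff_theta_conj[OF sV] unfolding \<sigma>_def by blast
  ultimately show ?thesis
    unfolding adapted_def theta_in_H_of_iff[OF assms(1)] \<sigma>_def[symmetric]
      invariant_subspace_iff_eigenspace_sum[OF lin inv sh]
    using eigenspaces_inter_eq_0[OF lin sh] by simp
qed

end
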